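(* Let $G=(V,E)$ be an undirected graph that is a pseudo-clique of size $n\ge 3$ and cardinality $k\ge 0$. Then the tree width of $G$ is $n-1$.
   Context: An undirected graph $G=(V,E)$ is a pseudo-clique if $V$ can be partitioned into a set $V_{\mathit{main}}$ of main-nodes and, for each pair $u\neq v$ of main-nodes, a set $V_{u,v}$ of edge-nodes, such that for each such pair, writing $V_{u,v}=\{v_1,\dots,v_m\}$, the edges $(u,v_1),(v_1,v_2),\dots,(v_{m-1},v_m),(v_m,v)$ are present (so $u,v_1,\dots,v_m,v$ is a simple path from $u$ to $v$), and no other edges are present. The size of the pseudo-clique is $|V_{\mathit{main}}|$, and its cardinality is $\max_{u\neq v\in V_{\mathit{main}}}|V_{u,v}|$. *)

theory Defs
  imports Main
begin

text \<open>Undirected graphs are represented as a vertex set V and a set E of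
  edges, each edge being a two-element set of vertices.\<close>

definition path_edges :: "'a list \<Rightarrow> 'a set set" where
  "path_edges xs = {{xs ! i, xs ! Suc i} | i. Suc i < length xs}"

text \<open>The main-node set is M;
  for an (unordered) pair of distinct main nodes u, v the edge-node set V_{u,v}
  is set (P u v), where the list P u v enumerates it in path order from u to v
  (so P v u is the reverse of P u v).\<close>

definition pseudo_clique :: "'a set \<Rightarrow> 'a set set \<Rightarrow> nat \<Rightarrow> nat \<Rightarrow> bool" where
  "pseudo_clique V E n k \<longleftrightarrow>
     (\<exists>M P. finite M \<and> card M = n \<and>
        (\<forall>u\<in>M. \<forall>v\<in>M. u \<noteq> v \<longrightarrow>
            P v u = rev (P u v) \<and> distinct (P u v) \<and> set (P u v) \<inter> M = {}) \<and>
        (\<forall>u\<in>M. \<forall>v\<in>M. \<forall>u'\<in>M. \<forall>v'\<in>M. u \<noteq> v \<and> u' \<noteq> v' \<and> {u, v} \<noteq> {u', v'} \<longrightarrow>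
            set (P u v) \<inter> set (P u' v') = {}) \<and>
        V = M \<union> \<Union>{set (P u v) | u v. u \<in> M \<and> v \<in> M \<and> u \<noteq> v} \<and>
        E = \<Union>{path_edges (u # P u v @ [v]) | u v. u \<in> M \<and> v \<in> M \<and> u \<noteq> v} \<and>
        k = Max {length (P u v) | u v. u \<in> M \<and> v \<in> M \<and> u \<noteq> v})"

definition has_cycle :: "'b set set \<Rightarrow> bool" where
  "has_cycle F \<longleftrightarrow> (\<exists>cs. length cs \<ge> 3 \<and> distinct cs \<and>
      (\<forall>i < length cs. {cs ! i, cs ! ((i + 1) mod length cs)} \<in> F))"

definition is_tree :: "'b set \<Rightarrow> 'b set set \<Rightarrow> bool" where
  "is_tree I F \<longleftrightarrow> finite I \<and> I \<noteq> {} \<and>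
     F \<subseteq> {{i, j} | i j. i \<in> I \<and> j \<in> I \<and> i \<noteq> j} \<and>
     (\<forall>i\<in>I. \<forall>j\<in>I. (\<lambda>a b. {a, b} \<in> F)\<^sup>*\<^sup>* i j) \<and>
     \<not> has_cycle F"

definition tree_decomposition ::
  "'a set \<Rightarrow> 'a set set \<Rightarrow> 'b set \<Rightarrow> 'b set set \<Rightarrow> ('b \<Rightarrow> 'a set) \<Rightarrow> bool" where
  "tree_decomposition V E I F B \<longleftrightarrow> is_tree I F \<and>
     (\<forall>i\<in>I. B i \<subseteq> V) \<and>
     (\<forall>v\<in>V. \<exists>i\<in>I. v \<in> B i) \<and>
     (\<forall>e\<in>E. \<exists>i\<in>I. e \<subseteq> B i) \<and>
     (\<forall>v\<in>V. \<forall>i\<in>I. \<forall>j\<in>I. v \<in> B i \<and> v \<in> B j \<longrightarrow>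
        (\<lambda>a b. {a, b} \<in> F \<and> v \<in> B a \<and> v \<in> B b)\<^sup>*\<^sup>* i j)"

definition decomp_width :: "'b set \<Rightarrow> ('b \<Rightarrow> 'a set) \<Rightarrow> nat" where
  "decomp_width I B = Max ((\<lambda>i. card (B i)) ` I) - 1"

text \<open>Tree nodes are taken from nat (every finite tree is isomorphic to one on nat).\<close>

definition treewidth :: "'a set \<Rightarrow> 'a set set \<Rightarrow> nat" where
  "treewidth V E = (LEAST w. \<exists>(I :: nat set) F B.
      tree_decomposition V E I F B \<and> decomp_width I B = w)"

end

theory Submission
  imports Defs
begin

text \<open>Upper bound: a bag holding the n main nodes, with every path u, w1, ..., wm, v hung off it
  as a chain of bags of size 3 \<le> n, is a tree decomposition.  Lower bound: the main nodes u
  together with the inner nodes of their paths to main nodes of higher rank form n disjoint,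
  connected, pairwise adjacent vertex sets, i.e. a clique minor.  The bags meeting such a set form
  a subtree, these n subtrees intersect pairwise, and by the Helly property of subtrees of a tree
  some bag meets all of them.\<close>

section \<open>Connected vertex sets\<close>

definition connected_in :: "'b set set \<Rightarrow> 'b set \<Rightarrow> bool" where
  "connected_in F S \<longleftrightarrow> (\<forall>i\<in>S. \<forall>j\<in>S. (\<lambda>a b. {a, b} \<in> F \<and> a \<in> S \<and> b \<in> S)\<^sup>*\<^sup>* i j)"

lemma restricted_rtranclp_mono:
  assumes "(\<lambda>a b. {a, b} \<in> F \<and> a \<in> S \<and> b \<in> S)\<^sup>*\<^sup>* x y" "F \<subseteq> F'" "S \<subseteq> S'"
  shows "(\<lambda>a b. {a, b} \<in> F' \<and> a \<in> S' \<and> b \<in> S')\<^sup>*\<^sup>* x y"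
  using assms(1) by (rule rtranclp_mono[THEN predicate2D, rotated]) (use assms(2,3) in blast)

lemma connected_in_singleton: "connected_in F {x}"
  unfolding connected_in_def by simp

lemma connected_in_mono:
  assumes "connected_in F S" "F \<subseteq> F'"
  shows "connected_in F' S"
  unfolding connected_in_def
proof (intro ballI)
  fix i j assume "i \<in> S" "j \<in> S"
  then have "(\<lambda>a b. {a, b} \<in> F \<and> a \<in> S \<and> b \<in> S)\<^sup>*\<^sup>* i j"
    using assms(1) unfolding connected_in_def by blast
  then show "(\<lambda>a b. {a, b} \<in> F' \<and> a \<in> S \<and> b \<in> S)\<^sup>*\<^sup>* i j"
    by (rule rtranclp_mono[THEN predicate2D, rotated]) (use assms(2) in blast)
qed

lemma connected_in_insert_leaf:
  assumes conn: "connected_in F S" and i: "i \<in> S"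
  shows "connected_in (insert {j, i} F) (insert j S)"
proof -
  let ?R = "\<lambda>a b. {a, b} \<in> insert {j, i} F \<and> a \<in> insert j S \<and> b \<in> insert j S"
  have old: "?R\<^sup>*\<^sup>* a b" if "a \<in> S" "b \<in> S" for a b
  proof -
    have "(\<lambda>a b. {a, b} \<in> F \<and> a \<in> S \<and> b \<in> S)\<^sup>*\<^sup>* a b"
      using conn that unfolding connected_in_def by blast
    then show ?thesis by (rule restricted_rtranclp_mono) auto
  qed
  have ji: "?R j i" and ij: "?R i j" using i by (auto simp: insert_commute)
  have "?R\<^sup>*\<^sup>* a b" if "a \<in> insert j S" "b \<in> insert j S" for a b
  proof (cases "a = j"; cases "b = j")
    assume "a = j" "b \<noteq> j"
    then show ?thesis using that old[OF i] converse_rtranclp_into_rtranclp[of ?R, OF ji] by auto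
  next
    assume "a \<noteq> j" "b = j"
    then show ?thesis using that old[of a i] i rtranclp.rtrancl_into_rtrancl[of ?R, OF _ ij] by auto
  qed (use that old in auto)
  then show ?thesis unfolding connected_in_def by blast
qed

lemma connected_in_insert_Union:
  assumes "\<And>S. S \<in> \<SS> \<Longrightarrow> connected_in F S \<and> c \<in> S"
  shows "connected_in F (insert c (\<Union>\<SS>))"
proof -
  let ?U = "insert c (\<Union>\<SS>)"
  let ?R = "\<lambda>a b. {a, b} \<in> F \<and> a \<in> ?U \<and> b \<in> ?U"
  have "?R\<^sup>*\<^sup>* c x \<and> ?R\<^sup>*\<^sup>* x c" if x: "x \<in> ?U" for x
  proof (cases "x = c")
    case False
    then obtain S where S: "S \<in> \<SS>" "x \<in> S" using x by blast
    then have "(\<lambda>a b. {a, b} \<in> F \<and> a \<in> S \<and> b \<in> S)\<^sup>*\<^sup>* c x \<and>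
               (\<lambda>a b. {a, b} \<in> F \<and> a \<in> S \<and> b \<in> S)\<^sup>*\<^sup>* x c"
      using assms unfolding connected_in_def by blast
    moreover have "S \<subseteq> ?U" using S(1) by blast
    ultimately show ?thesis
      using restricted_rtranclp_mono[of F S] by blast
  qed simp
  then show ?thesis
    unfolding connected_in_def by (metis (no_types, lifting) rtranclp_trans)
qed

section \<open>Paths\<close>

lemma path_edges_Cons_Cons: "path_edges (a # b # xs) = insert {a, b} (path_edges (b # xs))"
proof (intro set_eqI iffI)
  fix e assume "e \<in> path_edges (a # b # xs)"
  then obtain i where i: "e = {(a # b # xs) ! i, (a # b # xs) ! Suc i}" "Suc i < length (a # b # xs)"
    unfolding path_edges_def by blast
  then show "e \<in> insert {a, b} (path_edges (b # xs))"
    unfolding path_edges_def by (cases i) auto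
next
  fix e assume "e \<in> insert {a, b} (path_edges (b # xs))"
  then show "e \<in> path_edges (a # b # xs)"
  proof
    assume "e = {a, b}"
    then have "e = {(a # b # xs) ! 0, (a # b # xs) ! Suc 0}" by simp
    then show ?thesis unfolding path_edges_def by fastforce
  next
    assume "e \<in> path_edges (b # xs)"
    then obtain k where "e = {(a # b # xs) ! Suc k, (a # b # xs) ! Suc (Suc k)}"
      "Suc (Suc k) < length (a # b # xs)"
      unfolding path_edges_def by auto
    then show ?thesis unfolding path_edges_def by blast
  qed
qed

lemma path_edges_rev: "path_edges (rev xs) = path_edges xs"
proof -
  have "path_edges (rev xs) \<subseteq> path_edges xs" for xs :: "'a list"
  proof
    fix e assume "e \<in> path_edges (rev xs)"
    then obtain i where i: "e = {rev xs ! i, rev xs ! Suc i}" "Suc i < length xs"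
      unfolding path_edges_def by auto
    define k where "k = length xs - Suc (Suc i)"
    have k: "Suc k < length xs" "rev xs ! i = xs ! Suc k" "rev xs ! Suc i = xs ! k"
      using i(2) unfolding k_def by (auto simp: rev_nth Suc_diff_Suc)
    then show "e \<in> path_edges xs"
      using i(1) unfolding path_edges_def by (auto simp: insert_commute)
  qed
  from this[of xs] this[of "rev xs"] show ?thesis by simp
qed

lemma path_edges_append: "path_edges xs \<subseteq> path_edges (xs @ ys)"
  unfolding path_edges_def by (force simp: nth_append)

lemma connected_in_path_edges: "connected_in (path_edges xs) (set xs)"
proof (induction xs rule: induct_list012)
  case (3 a b xs)
  have "connected_in (insert {a, b} (path_edges (b # xs))) (insert a (set (b # xs)))"
    by (rule connected_in_insert_leaf[OF "3.IH"(2)]) simp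
  then show ?case by (simp add: path_edges_Cons_Cons)
qed (simp_all add: connected_in_def)

section \<open>Trees\<close>

lemma is_tree_edge:
  assumes "is_tree I F" "{x, y} \<in> F"
  shows "x \<in> I \<and> y \<in> I \<and> x \<noteq> y"
  using assms unfolding is_tree_def by (auto simp: doubleton_eq_iff)

lemma is_tree_connected_in:
  assumes "is_tree I F"
  shows "connected_in F I"
  unfolding connected_in_def
proof (intro ballI)
  fix i j assume "i \<in> I" "j \<in> I"
  then have "(\<lambda>a b. {a, b} \<in> F)\<^sup>*\<^sup>* i j" using assms unfolding is_tree_def by blast
  then show "(\<lambda>a b. {a, b} \<in> F \<and> a \<in> I \<and> b \<in> I)\<^sup>*\<^sup>* i j"
    by (rule rtranclp_mono[THEN predicate2D, rotated]) (use is_tree_edge[OF assms] in blast)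
qed

lemma has_cycle_mono: "has_cycle F \<Longrightarrow> F \<subseteq> F' \<Longrightarrow> has_cycle F'"
  unfolding has_cycle_def by blast

definition is_path :: "'b set set \<Rightarrow> 'b list \<Rightarrow> bool" where
  "is_path F xs \<longleftrightarrow> distinct xs \<and> (\<forall>i. Suc i < length xs \<longrightarrow> {xs ! i, xs ! Suc i} \<in> F)"

lemma closing_edge_has_cycle:
  assumes "is_path F xs" "3 \<le> length xs" "{last xs, hd xs} \<in> F"
  shows "has_cycle F"
  unfolding has_cycle_def
proof (intro exI conjI allI impI)
  fix i assume i: "i < length xs"
  show "{xs ! i, xs ! ((i + 1) mod length xs)} \<in> F"
  proof (cases "Suc i < length xs")
    case True
    then show ?thesis using assms(1) unfolding is_path_def by simp
  next
    case False
    then have "Suc i = length xs" using i by simp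
    then have "i = length xs - 1" "(i + 1) mod length xs = 0" by simp_all
    moreover have "xs \<noteq> []" using assms(2) by auto
    ultimately show ?thesis
      using assms(3) by (simp add: last_conv_nth hd_conv_nth)
  qed
qed (use assms in \<open>auto simp: is_path_def\<close>)

text \<open>A neighbour outside the path would extend it, and a neighbour further along the path
  would close a cycle.\<close>

lemma longest_path_starts_at_leaf:
  assumes T: "is_tree I F" and xs: "is_path F xs" "set xs \<subseteq> I" "2 \<le> length xs"
    and longest: "\<And>ys. is_path F ys \<Longrightarrow> set ys \<subseteq> I \<Longrightarrow> length ys \<le> length xs"
    and edge: "{xs ! 0, x} \<in> F"
  shows "x = xs ! 1"
proof -
  have xI: "x \<in> I" and x0: "x \<noteq> xs ! 0" using is_tree_edge[OF T edge] by auto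
  have "x \<in> set xs"
  proof (rule ccontr)
    assume "x \<notin> set xs"
    moreover have "{(x # xs) ! i, (x # xs) ! Suc i} \<in> F" if "Suc i < length (x # xs)" for i
      using xs(1) edge that unfolding is_path_def by (cases i) (auto simp: insert_commute)
    ultimately have "is_path F (x # xs)" using xs(1) unfolding is_path_def by simp
    then show False using longest[of "x # xs"] xI xs(2) by simp
  qed
  then obtain j where j: "j < length xs" "xs ! j = x" by (meson in_set_conv_nth)
  have "\<not> 2 \<le> j"
  proof
    assume "2 \<le> j"
    have "has_cycle F"
    proof (rule closing_edge_has_cycle[of F "take (Suc j) xs"])
      show "is_path F (take (Suc j) xs)" using xs(1) unfolding is_path_def by simp
      show "{last (take (Suc j) xs), hd (take (Suc j) xs)} \<in> F"
        using edge j \<open>2 \<le> j\<close>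
        by (simp add: take_Suc_conv_app_nth hd_conv_nth nth_append insert_commute)
    qed (use j \<open>2 \<le> j\<close> in simp)
    then show False using T unfolding is_tree_def by blast
  qed
  moreover have "j \<noteq> 0" using j x0 by (cases j) auto
  ultimately have "j = 1" by simp
  then show ?thesis using j by simp
qed

lemma is_tree_has_leaf:
  assumes T: "is_tree I F" and two: "2 \<le> card I"
  obtains l p where "l \<in> I" "p \<in> I" "l \<noteq> p" "{l, p} \<in> F" "\<And>x. {l, x} \<in> F \<Longrightarrow> x = p"
proof -
  have fin: "finite I" using T unfolding is_tree_def by blast
  obtain a b where ab: "a \<in> I" "b \<in> I" "a \<noteq> b"
    using two fin by (metis card_le_Suc0_iff_eq not_less_eq_eq numeral_2_eq_2)
  have "(\<lambda>a b. {a, b} \<in> F)\<^sup>*\<^sup>* a b" using T ab unfolding is_tree_def by blast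
  then obtain c where ac: "{a, c} \<in> F" using ab(3) by (cases rule: converse_rtranclpE) auto
  have ac_path: "is_path F [a, c] \<and> set [a, c] \<subseteq> I"
    using is_tree_edge[OF T ac] ac unfolding is_path_def by (auto simp: less_Suc_eq)
  have "length ys < Suc (card I)" if "is_path F ys \<and> set ys \<subseteq> I" for ys
  proof -
    have "length ys = card (set ys)" using that unfolding is_path_def by (simp add: distinct_card)
    also have "\<dots> \<le> card I" using that fin by (simp add: card_mono)
    finally show ?thesis by simp
  qed
  then obtain xs where xs: "is_path F xs" "set xs \<subseteq> I"
    and longest: "\<And>ys. is_path F ys \<Longrightarrow> set ys \<subseteq> I \<Longrightarrow> length ys \<le> length xs"
    using ex_has_greatest_nat[of "\<lambda>ys. is_path F ys \<and> set ys \<subseteq> I" "[a, c]" length "Suc (card I)"]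
      ac_path by blast
  have len: "2 \<le> length xs" using longest ac_path by fastforce
  show ?thesis
  proof (rule that)
    show "{xs ! 0, xs ! 1} \<in> F" using xs(1) len unfolding is_path_def by simp
    then show "xs ! 0 \<in> I" "xs ! 1 \<in> I" "xs ! 0 \<noteq> xs ! 1" using is_tree_edge[OF T] by auto
  qed (use longest_path_starts_at_leaf[OF T xs len longest] in blast)
qed

text \<open>Contracting the leaf edge onto the neighbour p turns walks into walks avoiding l.\<close>

lemma leaf_contraction_rtranclp:
  assumes leaf: "\<And>x. {l, x} \<in> F \<Longrightarrow> x = p"
    and walk: "(\<lambda>a b. {a, b} \<in> F \<and> a \<in> S \<and> b \<in> S)\<^sup>*\<^sup>* x y"
  shows "(\<lambda>a b. {a, b} \<in> {e \<in> F. l \<notin> e} \<and> a \<in> S - {l} \<and> b \<in> S - {l})\<^sup>*\<^sup>*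
           (if x = l then p else x) (if y = l then p else y)"
  using walk
proof (induction rule: rtranclp_induct)
  case (step b c)
  then have e: "{b, c} \<in> F" "b \<in> S" "c \<in> S" by auto
  show ?case
  proof (cases "b = l \<or> c = l")
    case True
    have "(if b = l then p else b) = (if c = l then p else c)"
    proof (cases "b = l")
      case True
      then show ?thesis using leaf[of c] e(1) by auto
    next
      case False
      then show ?thesis using True leaf[of b] e(1) by (auto simp: insert_commute)
    qed
    then show ?thesis using step.IH by simp
  next
    case False
    then show ?thesis using step.IH e by (auto intro: rtranclp.rtrancl_into_rtrancl)
  qed
qed simp

lemma connected_in_remove_leaf:
  assumes "connected_in F S" "\<And>x. {l, x} \<in> F \<Longrightarrow> x = p"
  shows "connected_in {e \<in> F. l \<notin> e} (S - {l})"
  unfolding connected_in_def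
proof (intro ballI)
  fix i j assume ij: "i \<in> S - {l}" "j \<in> S - {l}"
  then have "(\<lambda>a b. {a, b} \<in> F \<and> a \<in> S \<and> b \<in> S)\<^sup>*\<^sup>* i j"
    using assms(1) unfolding connected_in_def by blast
  from leaf_contraction_rtranclp[of l F p, OF assms(2) this] ij
  show "(\<lambda>a b. {a, b} \<in> {e \<in> F. l \<notin> e} \<and> a \<in> S - {l} \<and> b \<in> S - {l})\<^sup>*\<^sup>* i j"
    by simp
qed

lemma connected_in_leaf_neighbour:
  assumes "connected_in F S" "l \<in> S" "y \<in> S" "y \<noteq> l" "\<And>x. {l, x} \<in> F \<Longrightarrow> x = p"
  shows "p \<in> S"
proof -
  have "(\<lambda>a b. {a, b} \<in> F \<and> a \<in> S \<and> b \<in> S)\<^sup>*\<^sup>* l y"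
    using assms(1-3) unfolding connected_in_def by blast
  then obtain c where "{l, c} \<in> F" "c \<in> S"
    using assms(4) by (cases rule: converse_rtranclpE) auto
  then show ?thesis using assms(5) by auto
qed

lemma has_cycle_remove_leaf:
  assumes "has_cycle F" and leaf: "\<And>x. {j, x} \<in> F \<Longrightarrow> x = i"
  shows "has_cycle {e \<in> F. j \<notin> e}"
proof -
  obtain cs where cs: "3 \<le> length cs" "distinct cs"
    and edge: "\<And>a. a < length cs \<Longrightarrow> {cs ! a, cs ! ((a + 1) mod length cs)} \<in> F"
    using assms(1) unfolding has_cycle_def by blast
  define L where "L = length cs"
  have "j \<notin> set cs"
  proof
    assume "j \<in> set cs"
    then obtain a where a: "a < L" "cs ! a = j" unfolding L_def by (auto simp: in_set_conv_nth)
    define b where "b = (if a = 0 then L - 1 else a - 1)"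
    have L3: "3 \<le> L" using cs(1) unfolding L_def .
    have b: "b < L" "(b + 1) mod L = a" "(a + 1) mod L \<noteq> b" "(a + 1) mod L < L"
      using a(1) L3 unfolding b_def by (auto simp: mod_if)
    have "cs ! ((a + 1) mod L) = i" using edge[of a] a leaf unfolding L_def by simp
    moreover have "cs ! b = i"
      using edge[of b] b a leaf unfolding L_def by (simp add: insert_commute)
    ultimately show False using b cs(2) nth_eq_iff_index_eq unfolding L_def by metis
  qed
  moreover have "cs ! a \<in> set cs" "cs ! ((a + 1) mod length cs) \<in> set cs" if "a < length cs" for a
    using that by (auto intro!: nth_mem mod_less_divisor)
  ultimately show ?thesis
    using cs edge unfolding has_cycle_def by (intro exI[of _ cs]) auto
qed

lemma is_tree_remove_leaf:
  assumes T: "is_tree I F" and "l \<in> I" "p \<in> I" "l \<noteq> p" and leaf: "\<And>x. {l, x} \<in> F \<Longrightarrow> x = p"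
  shows "is_tree (I - {l}) {e \<in> F. l \<notin> e}"
proof -
  have "connected_in {e \<in> F. l \<notin> e} (I - {l})"
    using connected_in_remove_leaf[OF is_tree_connected_in[OF T] leaf] .
  then have "(\<lambda>a b. {a, b} \<in> {e \<in> F. l \<notin> e})\<^sup>*\<^sup>* i j" if "i \<in> I - {l}" "j \<in> I - {l}" for i j
    using that unfolding connected_in_def by (blast intro: rtranclp_mono[THEN predicate2D, rotated])
  then show ?thesis
    using T assms(2-4) has_cycle_mono[of "{e \<in> F. l \<notin> e}" F] unfolding is_tree_def by blast
qed

lemma is_tree_add_leaf:
  assumes T: "is_tree I F" and j: "j \<notin> I" and i: "i \<in> I"
  shows "is_tree (insert j I) (insert {j, i} F)"
proof -
  have "connected_in (insert {j, i} F) (insert j I)"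
    using connected_in_insert_leaf[OF is_tree_connected_in[OF T] i] .
  then have conn: "(\<lambda>a b. {a, b} \<in> insert {j, i} F)\<^sup>*\<^sup>* a b" if "a \<in> insert j I" "b \<in> insert j I" for a b
    using that unfolding connected_in_def by (blast intro: rtranclp_mono[THEN predicate2D, rotated])
  have "\<not> has_cycle (insert {j, i} F)"
  proof
    assume "has_cycle (insert {j, i} F)"
    moreover have "x = i" if "{j, x} \<in> insert {j, i} F" for x
      using that j is_tree_edge[OF T, of j x] by (auto simp: doubleton_eq_iff)
    ultimately have "has_cycle {e \<in> insert {j, i} F. j \<notin> e}" by (rule has_cycle_remove_leaf)
    then have "has_cycle F" by (rule has_cycle_mono) auto
    then show False using T unfolding is_tree_def by blast
  qed
  then show ?thesis
    using T conn i j unfolding is_tree_def by blast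
qed

text \<open>Helly property of subtrees, by induction on the tree: unless some subtree is the leaf l
  alone, deleting l keeps every subtree connected, nonempty and pairwise intersecting, because
  a subtree containing l and another node also contains the neighbour of l.\<close>

lemma subtrees_Helly:
  assumes "is_tree I F" "\<SS> \<noteq> {}"
    and "\<And>S. S \<in> \<SS> \<Longrightarrow> S \<noteq> {} \<and> S \<subseteq> I \<and> connected_in F S"
    and "\<And>S S'. S \<in> \<SS> \<Longrightarrow> S' \<in> \<SS> \<Longrightarrow> S \<inter> S' \<noteq> {}"
  shows "\<exists>t\<in>I. \<forall>S\<in>\<SS>. t \<in> S"
  using assms
proof (induction "card I" arbitrary: I F \<SS> rule: less_induct)
  case less
  note T = less.prems(1) and subtree = less.prems(3) and meet = less.prems(4)
  have fin: "finite I" and ne: "I \<noteq> {}" using T unfolding is_tree_def by auto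
  show ?case
  proof (cases "2 \<le> card I")
    case False
    moreover have "0 < card I" using fin ne by (simp add: card_gt_0_iff)
    ultimately have "card I = 1" by linarith
    then obtain t where t: "I = {t}" using card_1_singletonE by blast
    have "t \<in> S" if "S \<in> \<SS>" for S
      using subtree[OF that] t by auto
    then show ?thesis using t by simp
  next
    case True
    obtain l p where lp: "l \<in> I" "p \<in> I" "l \<noteq> p" "{l, p} \<in> F"
      and leaf: "\<And>x. {l, x} \<in> F \<Longrightarrow> x = p"
      using is_tree_has_leaf[OF T True] by blast
    show ?thesis
    proof (cases "{l} \<in> \<SS>")
      case True
      have "l \<in> S" if "S \<in> \<SS>" for S
        using meet[OF True that] by simp
      then show ?thesis using lp(1) by blast
    next
      case False
      have p_mem: "p \<in> S" if S: "S \<in> \<SS>" "l \<in> S" for S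
      proof -
        have "S \<noteq> {l}" using False S(1) by auto
        then obtain y where "y \<in> S" "y \<noteq> l" using subtree[OF S(1)] by auto
        then show ?thesis
          using connected_in_leaf_neighbour[of F S l y p] subtree[OF S(1)] S(2) leaf by simp
      qed
      let ?\<SS> = "(\<lambda>S. S - {l}) ` \<SS>"
      have "\<exists>t\<in>I - {l}. \<forall>S\<in>?\<SS>. t \<in> S"
      proof (rule less.hyps)
        show "card (I - {l}) < card I" using fin lp(1) by (rule card_Diff1_less)
        show "is_tree (I - {l}) {e \<in> F. l \<notin> e}" using is_tree_remove_leaf[OF T lp(1-3) leaf] .
        show "?\<SS> \<noteq> {}" using less.prems(2) by simp
        show "S' \<noteq> {} \<and> S' \<subseteq> I - {l} \<and> connected_in {e \<in> F. l \<notin> e} S'" if "S' \<in> ?\<SS>" for S'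
        proof -
          obtain S where S: "S \<in> \<SS>" "S' = S - {l}" using \<open>S' \<in> ?\<SS>\<close> by auto
          have "S \<noteq> {l}" using False S(1) by auto
          moreover have "connected_in {e \<in> F. l \<notin> e} (S - {l})"
            using subtree[OF S(1)] connected_in_remove_leaf[of F S l p, OF _ leaf] by simp
          ultimately show ?thesis using subtree[OF S(1)] S(2) by auto
        qed
        show "S' \<inter> S'' \<noteq> {}" if S': "S' \<in> ?\<SS>" "S'' \<in> ?\<SS>" for S' S''
        proof -
          obtain S1 S2 where S: "S1 \<in> \<SS>" "S' = S1 - {l}" "S2 \<in> \<SS>" "S'' = S2 - {l}"
            using S' by auto
          obtain z where z: "z \<in> S1" "z \<in> S2" using meet[OF S(1,3)] by auto
          show ?thesis
          proof (cases "z = l")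
            case True
            then have "p \<in> S1" "p \<in> S2" using p_mem S(1,3) z by auto
            then show ?thesis using S lp(3) by auto
          qed (use S z in auto)
        qed
      qed
      then obtain t where "t \<in> I - {l}" "\<And>S. S \<in> \<SS> \<Longrightarrow> t \<in> S - {l}" by auto
      then show ?thesis by auto
    qed
  qed
qed

section \<open>Tree decompositions\<close>

lemma tree_decomposition_altdef:
  "tree_decomposition V E I F B \<longleftrightarrow> is_tree I F \<and> (\<forall>i\<in>I. B i \<subseteq> V) \<and>
     (\<forall>v\<in>V. \<exists>i\<in>I. v \<in> B i) \<and> (\<forall>e\<in>E. \<exists>i\<in>I. e \<subseteq> B i) \<and>
     (\<forall>v\<in>V. connected_in F {i \<in> I. v \<in> B i})"
proof -
  have "(\<lambda>a b. {a, b} \<in> F \<and> v \<in> B a \<and> v \<in> B b) =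
        (\<lambda>a b. {a, b} \<in> F \<and> a \<in> {i \<in> I. v \<in> B i} \<and> b \<in> {i \<in> I. v \<in> B i})"
    if "is_tree I F" for v
    using is_tree_edge[OF that] by blast
  then show ?thesis
    unfolding tree_decomposition_def connected_in_def by auto
qed

lemma tree_decomposition_mono_edges:
  assumes "tree_decomposition V E I F B" "\<forall>e\<in>E'. \<exists>i\<in>I. e \<subseteq> B i"
  shows "tree_decomposition V E' I F B"
  using assms unfolding tree_decomposition_def by blast

lemma tree_decomposition_add_leaf:
  assumes D: "tree_decomposition V E I F B" and j: "j \<notin> I" and i: "i \<in> I"
    and C: "C \<inter> V \<subseteq> B i" and En: "\<forall>e\<in>En. e \<subseteq> C"
  shows "tree_decomposition (V \<union> C) (E \<union> En) (insert j I) (insert {j, i} F) (B(j := C))"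
proof -
  have T: "is_tree I F" and BV: "\<forall>a\<in>I. B a \<subseteq> V" and cover: "\<forall>v\<in>V. \<exists>a\<in>I. v \<in> B a"
    and edges: "\<forall>e\<in>E. \<exists>a\<in>I. e \<subseteq> B a"
    and conn: "\<And>v. v \<in> V \<Longrightarrow> connected_in F {a \<in> I. v \<in> B a}"
    using D unfolding tree_decomposition_altdef by blast+
  let ?B = "B(j := C)"
  have B_old: "?B a = B a" if "a \<in> I" for a using that j by auto
  have "connected_in (insert {j, i} F) {a \<in> insert j I. v \<in> ?B a}" if v: "v \<in> V \<union> C" for v
  proof -
    consider "v \<notin> C" | "v \<in> C" "v \<in> V" | "v \<in> C" "v \<notin> V" by blast
    then show ?thesis
    proof cases
      case 1
      then have "{a \<in> insert j I. v \<in> ?B a} = {a \<in> I. v \<in> B a}" using B_old j by auto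
      moreover have "connected_in F {a \<in> I. v \<in> B a}" using conn 1 v by simp
      ultimately show ?thesis using connected_in_mono by (metis subset_insertI)
    next
      case 2
      then have "{a \<in> insert j I. v \<in> ?B a} = insert j {a \<in> I. v \<in> B a}" using B_old by auto
      moreover have "i \<in> {a \<in> I. v \<in> B a}" using 2 C i by blast
      then have "connected_in (insert {j, i} F) (insert j {a \<in> I. v \<in> B a})"
        by (rule connected_in_insert_leaf[OF conn[OF 2(2)]])
      ultimately show ?thesis by simp
    next
      case 3
      then have "{a \<in> insert j I. v \<in> ?B a} = {j}" using BV B_old by auto
      then show ?thesis by (simp add: connected_in_singleton)
    qed
  qed
  moreover have "\<forall>a\<in>insert j I. ?B a \<subseteq> V \<union> C" using BV B_old by auto
  moreover have "\<forall>v\<in>V \<union> C. \<exists>a\<in>insert j I. v \<in> ?B a" using cover B_old by fastforce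
  moreover have "\<forall>e\<in>E \<union> En. \<exists>a\<in>insert j I. e \<subseteq> ?B a" using edges En B_old by fastforce
  ultimately show ?thesis
    using is_tree_add_leaf[OF T j i] unfolding tree_decomposition_altdef by blast
qed

text \<open>A path u, w1, ..., wm, v of new vertices whose ends share a bag is absorbed by a chain of
  new leaves with bags {u, v, w1}, {w1, v, w2}, ..., {wm-1, v, wm}: each keeps v, so the edge
  from wm to v is covered too.\<close>

lemma tree_decomposition_add_path:
  fixes B :: "'b \<Rightarrow> 'a set"
  assumes "infinite (UNIV :: 'b set)" "tree_decomposition V E I F B" "\<forall>i\<in>I. card (B i) \<le> n" "3 \<le> n"
    "i0 \<in> I" "u \<in> B i0" "v \<in> B i0" "distinct P" "set P \<inter> V = {}"
  shows "\<exists>(I' :: 'b set) F' (B' :: 'b \<Rightarrow> 'a set).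
    tree_decomposition (V \<union> set P) (E \<union> path_edges (u # P @ [v])) I' F' B' \<and>
    (\<forall>i\<in>I'. card (B' i) \<le> n) \<and> I \<subseteq> I' \<and> (\<forall>i\<in>I. B' i = B i)"
  using assms(2-)
proof (induction P arbitrary: u V E I F B i0)
  case Nil
  have "path_edges [u, v] = {{u, v}}" unfolding path_edges_def by auto
  then have "tree_decomposition V (E \<union> path_edges (u # [] @ [v])) I F B"
    using tree_decomposition_mono_edges[OF Nil.prems(1)] Nil.prems(1,4-6)
    unfolding tree_decomposition_def by auto
  then show ?case using Nil.prems(2) by (intro exI[of _ I] exI[of _ F] exI[of _ B]) simp
next
  case (Cons w P)
  note D = Cons.prems(1)
  have "finite I" using D unfolding tree_decomposition_def is_tree_def by blast
  then obtain j where j: "j \<notin> I" using ex_new_if_finite[OF assms(1)] by blast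
  have uv: "u \<in> V" "v \<in> V" using D Cons.prems(4-6) unfolding tree_decomposition_def by auto
  define C where "C = {u, v, w}"
  have "C \<inter> V \<subseteq> B i0" using Cons.prems(5,6,8) unfolding C_def by auto
  then have D1: "tree_decomposition (V \<union> C) (E \<union> {{u, w}}) (insert j I) (insert {j, i0} F) (B(j := C))"
    by (rule tree_decomposition_add_leaf[OF D j Cons.prems(4)]) (auto simp: C_def)
  have "card C \<le> 3" unfolding C_def by (simp add: card_insert_if)
  then have small: "\<forall>i\<in>insert j I. card ((B(j := C)) i) \<le> n" using Cons.prems(2,3) by auto
  have ends: "w \<in> (B(j := C)) j" "v \<in> (B(j := C)) j" unfolding C_def by simp_all
  have new: "distinct P" "set P \<inter> (V \<union> C) = {}" using Cons.prems(7,8) uv unfolding C_def by auto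
  obtain I' :: "'b set" and F' B' where
    D': "tree_decomposition (V \<union> C \<union> set P) (E \<union> {{u, w}} \<union> path_edges (w # P @ [v])) I' F' B'"
    and bags: "\<forall>i\<in>I'. card (B' i) \<le> n" "insert j I \<subseteq> I'" "\<forall>i\<in>insert j I. B' i = (B(j := C)) i"
    using Cons.IH[OF D1 small Cons.prems(3) insertI1 ends new] by (elim exE conjE)
  have "V \<union> C \<union> set P = V \<union> set (w # P)" using uv unfolding C_def by auto
  moreover have "E \<union> {{u, w}} \<union> path_edges (w # P @ [v]) = E \<union> path_edges (u # (w # P) @ [v])"
    using path_edges_Cons_Cons[of u w "P @ [v]"] by auto
  moreover have "I \<subseteq> I'" "\<forall>i\<in>I. B' i = B i" using bags(2,3) j by auto
  ultimately show ?case using D' bags(1) by (intro exI[of _ I'] exI[of _ F'] exI[of _ B']) simp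
qed

lemma tree_decomposition_connected_bags_meeting:
  assumes D: "tree_decomposition V E I F B" and X: "X \<subseteq> V" "connected_in E X"
  shows "connected_in F {i \<in> I. B i \<inter> X \<noteq> {}}"
proof -
  let ?T = "{i \<in> I. B i \<inter> X \<noteq> {}}"
  let ?R = "\<lambda>a b. {a, b} \<in> F \<and> a \<in> ?T \<and> b \<in> ?T"
  have edges: "\<And>e. e \<in> E \<Longrightarrow> \<exists>i\<in>I. e \<subseteq> B i"
    and conn: "\<And>v. v \<in> V \<Longrightarrow> connected_in F {i \<in> I. v \<in> B i}"
    using D unfolding tree_decomposition_altdef by blast+
  have along: "?R\<^sup>*\<^sup>* i k" if z: "z \<in> X" "i \<in> I" "k \<in> I" "z \<in> B i" "z \<in> B k" for z i k
  proof -
    have "connected_in F {i \<in> I. z \<in> B i}" using conn X(1) z(1) by blast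
    then have "(\<lambda>a b. {a, b} \<in> F \<and> a \<in> {i \<in> I. z \<in> B i} \<and> b \<in> {i \<in> I. z \<in> B i})\<^sup>*\<^sup>* i k"
      using z(2-5) unfolding connected_in_def by simp
    then show ?thesis by (rule restricted_rtranclp_mono) (use z(1) in auto)
  qed
  have "?R\<^sup>*\<^sup>* i j" if ij: "i \<in> ?T" "j \<in> ?T" for i j
  proof -
    obtain x y where x: "x \<in> B i" "x \<in> X" and y: "y \<in> B j" "y \<in> X" using ij by blast
    have "(\<lambda>a b. {a, b} \<in> E \<and> a \<in> X \<and> b \<in> X)\<^sup>*\<^sup>* x y"
      using X(2) x(2) y(2) unfolding connected_in_def by simp
    then have "\<forall>k\<in>I. y \<in> B k \<longrightarrow> ?R\<^sup>*\<^sup>* i k"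
    proof (induction rule: rtranclp_induct)
      case base
      show ?case using along[OF x(2)] x(1) ij(1) by simp
    next
      case (step z z')
      then have zz': "{z, z'} \<in> E" "z' \<in> X" by simp_all
      then obtain k0 where k0: "k0 \<in> I" "z \<in> B k0" "z' \<in> B k0" using edges by blast
      then have "?R\<^sup>*\<^sup>* i k0" using step.IH by simp
      moreover have "?R\<^sup>*\<^sup>* k0 k" if "k \<in> I" "z' \<in> B k" for k
        using along[OF zz'(2) k0(1) that(1) k0(3) that(2)] .
      ultimately show ?case using rtranclp_trans[of ?R i k0] by simp
    qed
    then show ?thesis using ij(2) y(1) by simp
  qed
  then show ?thesis unfolding connected_in_def by simp
qed

lemma tree_decomposition_bag_meets_all:
  assumes D: "tree_decomposition V E I F B" and "M \<noteq> {}"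
    and branch: "\<And>u. u \<in> M \<Longrightarrow> X u \<noteq> {} \<and> X u \<subseteq> V \<and> connected_in E (X u)"
    and adjacent: "\<And>u w. u \<in> M \<Longrightarrow> w \<in> M \<Longrightarrow> u \<noteq> w \<Longrightarrow> \<exists>x\<in>X u. \<exists>y\<in>X w. {x, y} \<in> E"
  shows "\<exists>t\<in>I. \<forall>u\<in>M. B t \<inter> X u \<noteq> {}"
proof -
  have T: "is_tree I F" and cover: "\<And>v. v \<in> V \<Longrightarrow> \<exists>i\<in>I. v \<in> B i"
    and edges: "\<And>e. e \<in> E \<Longrightarrow> \<exists>i\<in>I. e \<subseteq> B i"
    using D unfolding tree_decomposition_def by blast+
  define T where "T u = {i \<in> I. B i \<inter> X u \<noteq> {}}" for u
  have T_ne: "T u \<noteq> {}" if u: "u \<in> M" for u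
  proof -
    obtain x where x: "x \<in> X u" using branch[OF u] by blast
    then obtain i where "i \<in> I" "x \<in> B i" using cover branch[OF u] by blast
    then show ?thesis using x unfolding T_def by blast
  qed
  have "\<exists>t\<in>I. \<forall>S\<in>T ` M. t \<in> S"
  proof (rule subtrees_Helly[OF T])
    show "T ` M \<noteq> {}" using \<open>M \<noteq> {}\<close> by simp
    show "S \<noteq> {} \<and> S \<subseteq> I \<and> connected_in F S" if S: "S \<in> T ` M" for S
    proof -
      obtain u where u: "u \<in> M" "S = T u" using S by blast
      have "connected_in F (T u)"
        unfolding T_def using tree_decomposition_connected_bags_meeting[OF D] branch[OF u(1)] by simp
      then show ?thesis using T_ne[OF u(1)] u(2) unfolding T_def by blast
    qed
    show "S \<inter> S' \<noteq> {}" if S: "S \<in> T ` M" "S' \<in> T ` M" for S S'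
    proof -
      obtain u w where uw: "u \<in> M" "w \<in> M" "S = T u" "S' = T w" using S by blast
      show ?thesis
      proof (cases "u = w")
        case True
        then show ?thesis using T_ne[OF uw(1)] uw(3,4) by simp
      next
        case False
        then obtain x y where xy: "x \<in> X u" "y \<in> X w" "{x, y} \<in> E" using adjacent uw(1,2) by blast
        then obtain i where "i \<in> I" "{x, y} \<subseteq> B i" using edges by blast
        then have "i \<in> T u" "i \<in> T w" using xy(1,2) unfolding T_def by blast+
        then show ?thesis using uw(3,4) by blast
      qed
    qed
  qed
  then show ?thesis unfolding T_def by auto
qed

lemma tree_decomposition_clique_minor_bag:
  assumes D: "tree_decomposition V E I F B" and "finite V"
    and branch: "\<And>u. u \<in> M \<Longrightarrow> X u \<noteq> {} \<and> X u \<subseteq> V \<and> connected_in E (X u)"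
    and disjoint: "\<And>u w. u \<in> M \<Longrightarrow> w \<in> M \<Longrightarrow> u \<noteq> w \<Longrightarrow> X u \<inter> X w = {}"
    and adjacent: "\<And>u w. u \<in> M \<Longrightarrow> w \<in> M \<Longrightarrow> u \<noteq> w \<Longrightarrow> \<exists>x\<in>X u. \<exists>y\<in>X w. {x, y} \<in> E"
  shows "\<exists>t\<in>I. card M \<le> card (B t)"
proof (cases "M = {}")
  case True
  then show ?thesis using D unfolding tree_decomposition_def is_tree_def by auto
next
  case False
  obtain t where t: "t \<in> I" "\<And>u. u \<in> M \<Longrightarrow> B t \<inter> X u \<noteq> {}"
    using tree_decomposition_bag_meets_all[of V E I F B M X, OF D False branch adjacent] by blast
  define g where "g u = (SOME x. x \<in> B t \<inter> X u)" for u
  have g: "g u \<in> B t \<inter> X u" if "u \<in> M" for u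
    unfolding g_def some_in_eq using t(2)[OF that] .
  have "inj_on g M"
  proof (rule inj_onI)
    fix u w assume "u \<in> M" "w \<in> M" "g u = g w"
    then have "g u \<in> X u \<inter> X w" using g[of u] g[of w] by auto
    then show "u = w" using disjoint \<open>u \<in> M\<close> \<open>w \<in> M\<close> by auto
  qed
  moreover have "g ` M \<subseteq> B t" using g by auto
  moreover have "finite (B t)"
    using D t(1) \<open>finite V\<close> unfolding tree_decomposition_def by (meson finite_subset)
  ultimately have "card M \<le> card (B t)" by (rule card_inj_on_le)
  then show ?thesis using t(1) by auto
qed

lemma treewidth_eqI:
  assumes "tree_decomposition V E (I :: nat set) F B" "\<forall>i\<in>I. card (B i) \<le> m"
    and "\<And>(I :: nat set) F B. tree_decomposition V E I F B \<Longrightarrow> \<exists>i\<in>I. m \<le> card (B i)"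
  shows "treewidth V E = m - 1"
proof -
  have width: "decomp_width I B \<ge> m - 1" if td: "tree_decomposition V E (I :: nat set) F B" for I F B
  proof -
    obtain t where t: "t \<in> I" "m \<le> card (B t)" using assms(3)[OF td] by blast
    have "finite I" using td unfolding tree_decomposition_def is_tree_def by blast
    then have "card (B t) \<le> Max ((\<lambda>i. card (B i)) ` I)" using t(1) by simp
    then show ?thesis unfolding decomp_width_def using t(2) by linarith
  qed
  have "finite I" "I \<noteq> {}" using assms(1) unfolding tree_decomposition_def is_tree_def by blast+
  then have "Max ((\<lambda>i. card (B i)) ` I) \<le> m" using assms(2) by simp
  then have "decomp_width I B = m - 1"
    using width[OF assms(1)] unfolding decomp_width_def by linarith
  then show ?thesis
    unfolding treewidth_def using assms(1) width by (intro Least_equality) blast+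
qed

section \<open>Pseudo-cliques\<close>

text \<open>The rank only serves to orient each pair of main nodes, so that every path is used once.\<close>

locale pseudo_clique_layout =
  fixes M :: "'a set" and P :: "'a \<Rightarrow> 'a \<Rightarrow> 'a list" and V :: "'a set" and E :: "'a set set"
    and rank :: "'a \<Rightarrow> nat"
  assumes finite_main: "finite M"
    and path: "\<And>u v. u \<in> M \<Longrightarrow> v \<in> M \<Longrightarrow> u \<noteq> v \<Longrightarrow>
      P v u = rev (P u v) \<and> distinct (P u v) \<and> set (P u v) \<inter> M = {}"
    and paths_disjoint: "\<And>u v u' v'. u \<in> M \<Longrightarrow> v \<in> M \<Longrightarrow> u' \<in> M \<Longrightarrow> v' \<in> M \<Longrightarrow>
      u \<noteq> v \<Longrightarrow> u' \<noteq> v' \<Longrightarrow> {u, v} \<noteq> {u', v'} \<Longrightarrow> set (P u v) \<inter> set (P u' v') = {}"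
    and vertices: "V = M \<union> \<Union>{set (P u v) | u v. u \<in> M \<and> v \<in> M \<and> u \<noteq> v}"
    and edges: "E = \<Union>{path_edges (u # P u v @ [v]) | u v. u \<in> M \<and> v \<in> M \<and> u \<noteq> v}"
    and rank_inj: "inj_on rank M"
begin

lemma rank_cases:
  assumes "u \<in> M" "v \<in> M" "u \<noteq> v"
  obtains "rank u < rank v" | "rank v < rank u"
  using assms rank_inj by (metis inj_on_eq_iff linorder_neqE_nat)

lemma finite_vertices: "finite V"
proof -
  have "{set (P u v) | u v. u \<in> M \<and> v \<in> M \<and> u \<noteq> v} \<subseteq> (\<lambda>(u, v). set (P u v)) ` (M \<times> M)"
    by auto
  then have "finite {set (P u v) | u v. u \<in> M \<and> v \<in> M \<and> u \<noteq> v}"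
    using finite_main by (meson finite_SigmaI finite_imageI finite_subset)
  then show ?thesis unfolding vertices using finite_main by auto
qed

lemma path_edge_mem:
  assumes "u \<in> M" "v \<in> M" "u \<noteq> v"
  shows "path_edges (u # P u v @ [v]) \<subseteq> E"
  unfolding edges using assms by blast

lemma forward_path_fresh:
  assumes "(u, v) \<notin> Q" "Q \<subseteq> {(a, b). a \<in> M \<and> b \<in> M \<and> rank a < rank b}"
    and uv: "u \<in> M" "v \<in> M" "rank u < rank v"
  shows "set (P u v) \<inter> (M \<union> \<Union>{set (P a b) | a b. (a, b) \<in> Q}) = {}"
proof -
  have uv': "u \<noteq> v" using uv(3) by auto
  have "set (P u v) \<inter> set (P a b) = {}" if ab: "(a, b) \<in> Q" for a b
  proof -
    have "(a, b) \<noteq> (u, v)" "a \<in> M" "b \<in> M" "rank a < rank b" using ab assms(1,2) by auto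
    then have "{u, v} \<noteq> {a, b}" "a \<noteq> b" using uv(3) by (auto simp: doubleton_eq_iff)
    then show ?thesis using paths_disjoint[OF uv(1,2) \<open>a \<in> M\<close> \<open>b \<in> M\<close> uv'] by simp
  qed
  then show ?thesis using path[OF uv(1,2) uv'] by auto
qed

lemma forward_paths_decomposition:
  assumes "finite Q" "Q \<subseteq> {(u, v). u \<in> M \<and> v \<in> M \<and> rank u < rank v}" "3 \<le> card M"
  shows "\<exists>(I :: nat set) F B.
    tree_decomposition (M \<union> \<Union>{set (P u v) | u v. (u, v) \<in> Q})
      (\<Union>{path_edges (u # P u v @ [v]) | u v. (u, v) \<in> Q}) I F B \<and>
    (\<forall>i\<in>I. card (B i) \<le> card M) \<and> (\<exists>i\<in>I. B i = M)"
  using assms(1,2)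
proof (induction Q rule: finite_induct)
  case empty
  have "\<not> has_cycle ({} :: nat set set)" unfolding has_cycle_def by force
  then have "tree_decomposition M {} {0 :: nat} {} (\<lambda>_. M)"
    unfolding tree_decomposition_def is_tree_def by auto
  then show ?case by (intro exI[of _ "{0 :: nat}"] exI[of _ "{}"] exI[of _ "\<lambda>_. M"]) simp
next
  case (insert q Q)
  obtain u v where q: "q = (u, v)" by (cases q)
  have uv: "u \<in> M" "v \<in> M" "rank u < rank v" using insert.prems q by auto
  have Q: "Q \<subseteq> {(a, b). a \<in> M \<and> b \<in> M \<and> rank a < rank b}" using insert.prems by simp
  obtain I :: "nat set" and F B i0 where
    D: "tree_decomposition (M \<union> \<Union>{set (P a b) | a b. (a, b) \<in> Q})
      (\<Union>{path_edges (a # P a b @ [b]) | a b. (a, b) \<in> Q}) I F B"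
    and small: "\<forall>i\<in>I. card (B i) \<le> card M" and i0: "i0 \<in> I" "B i0 = M"
    using insert.IH[OF Q] by (elim exE conjE bexE)
  have fresh: "set (P u v) \<inter> (M \<union> \<Union>{set (P a b) | a b. (a, b) \<in> Q}) = {}"
    using forward_path_fresh[OF _ Q uv] insert.hyps(2) q by simp
  have ends: "u \<in> B i0" "v \<in> B i0" "distinct (P u v)" using i0(2) uv path[of u v] by auto
  obtain I' :: "nat set" and F' B' where
    D': "tree_decomposition (M \<union> \<Union>{set (P a b) | a b. (a, b) \<in> Q} \<union> set (P u v))
      (\<Union>{path_edges (a # P a b @ [b]) | a b. (a, b) \<in> Q} \<union> path_edges (u # P u v @ [v])) I' F' B'"
    and bags: "\<forall>i\<in>I'. card (B' i) \<le> card M" "I \<subseteq> I'" "\<forall>i\<in>I. B' i = B i"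
    using tree_decomposition_add_path[OF infinite_UNIV_nat D small assms(3) i0(1) ends fresh]
    by (elim exE conjE)
  have "M \<union> \<Union>{set (P a b) | a b. (a, b) \<in> Q} \<union> set (P u v) =
      M \<union> \<Union>{set (P a b) | a b. (a, b) \<in> insert q Q}" using q by blast
  moreover have "\<Union>{path_edges (a # P a b @ [b]) | a b. (a, b) \<in> Q} \<union> path_edges (u # P u v @ [v]) =
      \<Union>{path_edges (a # P a b @ [b]) | a b. (a, b) \<in> insert q Q}" using q by blast
  moreover have "i0 \<in> I'" "B' i0 = M" using bags(2,3) i0 by auto
  ultimately show ?case
    using D' bags(1) by (intro exI[of _ I'] exI[of _ F'] exI[of _ B']) auto
qed

lemma path_edges_swap:
  assumes "u \<in> M" "v \<in> M" "u \<noteq> v"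
  shows "path_edges (v # P v u @ [u]) = path_edges (u # P u v @ [v])"
proof -
  have "v # P v u @ [u] = rev (u # P u v @ [v])" using path[OF assms] by simp
  then show ?thesis by (simp only: path_edges_rev)
qed

lemma tree_decomposition_bags_le_card_main:
  assumes "3 \<le> card M"
  shows "\<exists>(I :: nat set) F B. tree_decomposition V E I F B \<and> (\<forall>i\<in>I. card (B i) \<le> card M)"
proof -
  let ?Q = "{(u, v). u \<in> M \<and> v \<in> M \<and> rank u < rank v}"
  let ?V = "M \<union> \<Union>{set (P u v) | u v. (u, v) \<in> ?Q}"
  let ?E = "\<Union>{path_edges (u # P u v @ [v]) | u v. (u, v) \<in> ?Q}"
  have "finite ?Q" by (rule finite_subset[of _ "M \<times> M"]) (auto simp: finite_main)
  then obtain I :: "nat set" and F B where D: "tree_decomposition ?V ?E I F B"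
    and small: "\<forall>i\<in>I. card (B i) \<le> card M"
    using forward_paths_decomposition[OF _ subset_refl assms] by blast
  have oriented:
    "set (P u v) \<subseteq> \<Union>{set (P a b) | a b. (a, b) \<in> ?Q} \<and> path_edges (u # P u v @ [v]) \<subseteq> ?E"
    if uv: "u \<in> M" "v \<in> M" "u \<noteq> v" for u v
  proof (cases rule: rank_cases[OF uv])
    case 1
    then show ?thesis using uv by blast
  next
    case 2
    have "set (P u v) = set (P v u)" using path[OF uv] by simp
    moreover have "path_edges (u # P u v @ [v]) = path_edges (v # P v u @ [u])"
      using path_edges_swap[OF uv(2,1) uv(3)[symmetric]] .
    ultimately show ?thesis using 2 uv by blast
  qed
  have "?V = V" unfolding vertices using oriented by blast
  moreover have "\<forall>e\<in>E. \<exists>i\<in>I. e \<subseteq> B i"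
  proof
    fix e assume "e \<in> E"
    then have "e \<in> ?E" unfolding edges using oriented by blast
    then show "\<exists>i\<in>I. e \<subseteq> B i" using D unfolding tree_decomposition_def by blast
  qed
  ultimately have "tree_decomposition V E I F B"
    using tree_decomposition_mono_edges[OF D] by simp
  then show ?thesis using small by blast
qed

text \<open>The branch sets of a clique minor on the main nodes.\<close>

definition branch :: "'a \<Rightarrow> 'a set" where
  "branch u = insert u (\<Union>{set (P u v) | v. v \<in> M \<and> rank u < rank v})"

lemma branch_subset:
  assumes "u \<in> M"
  shows "branch u \<subseteq> V"
proof -
  have "set (P u v) \<subseteq> V" if "v \<in> M" "rank u < rank v" for v
    unfolding vertices using assms that by (auto intro!: UnI2)
  then show ?thesis unfolding branch_def using assms vertices by blast
qed

lemma branch_connected: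
  assumes "u \<in> M"
  shows "connected_in E (branch u)"
proof -
  have "branch u = insert u (\<Union>{set (u # P u v) | v. v \<in> M \<and> rank u < rank v})"
    unfolding branch_def by auto
  moreover have "connected_in E S \<and> u \<in> S" if S: "S \<in> {set (u # P u v) | v. v \<in> M \<and> rank u < rank v}" for S
  proof -
    obtain v where v: "v \<in> M" "rank u < rank v" "S = set (u # P u v)" using S by blast
    have "path_edges (u # P u v) \<subseteq> E"
      using path_edges_append[of "u # P u v" "[v]"] path_edge_mem[OF assms v(1)] v(2) by auto
    then have "connected_in E (set (u # P u v))" by (rule connected_in_mono[OF connected_in_path_edges])
    then show ?thesis using v(3) by simp
  qed
  then have "connected_in E (insert u (\<Union>{set (u # P u v) | v. v \<in> M \<and> rank u < rank v}))"
    by (rule connected_in_insert_Union)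
  ultimately show ?thesis by simp
qed

lemma branch_disjoint:
  assumes uw: "u \<in> M" "w \<in> M" "u \<noteq> w"
  shows "branch u \<inter> branch w = {}"
proof -
  have main_notin: "a \<notin> set (P b v)" if "a \<in> M" "b \<in> M" "v \<in> M" "rank b < rank v" for a b v
    using path[of b v] that by auto
  have "x \<notin> branch w" if xu: "x \<in> branch u" for x
  proof
    assume xw: "x \<in> branch w"
    consider "x = u" | v where "v \<in> M" "rank u < rank v" "x \<in> set (P u v)"
      using xu unfolding branch_def by blast
    then show False
    proof cases
      case 1
      then show False using xw uw main_notin[of u w] unfolding branch_def by blast
    next
      case 2
      note v = this
      consider "x = w" | v' where "v' \<in> M" "rank w < rank v'" "x \<in> set (P w v')"
        using xw unfolding branch_def by blast
      then show False
      proof cases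
        case 1
        then show False using v main_notin[of w u v] uw by blast
      next
        case 2
        have "{u, v} \<noteq> {w, v'}" "u \<noteq> v" "w \<noteq> v'"
          using uw(3) v(2) 2(2) by (auto simp: doubleton_eq_iff)
        then show False using paths_disjoint[OF uw(1) v(1) uw(2) 2(1)] v(3) 2(3) by blast
      qed
    qed
  qed
  then show ?thesis by blast
qed

lemma branch_adjacent_forward:
  assumes "u \<in> M" "w \<in> M" "rank u < rank w"
  shows "\<exists>x\<in>branch u. \<exists>y\<in>branch w. {x, y} \<in> E"
proof -
  have uw: "u \<noteq> w" using assms(3) by auto
  let ?x = "last (u # P u w)"
  have "?x \<in> branch u" using assms unfolding branch_def by (auto simp: last_ConsR)
  moreover have "w \<in> branch w" unfolding branch_def by simp
  moreover have "{?x, w} \<in> path_edges (u # P u w @ [w])"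
    unfolding path_edges_def
    by (rule CollectI, rule exI[of _ "length (P u w)"]) (simp add: nth_append last_conv_nth)
  ultimately show ?thesis using path_edge_mem[OF assms(1,2) uw] by blast
qed

lemma tree_decomposition_bag_ge_card_main:
  assumes "tree_decomposition V E I F B"
  shows "\<exists>t\<in>I. card M \<le> card (B t)"
proof (rule tree_decomposition_clique_minor_bag[OF assms finite_vertices])
  show "branch u \<noteq> {} \<and> branch u \<subseteq> V \<and> connected_in E (branch u)" if "u \<in> M" for u
    using branch_subset[OF that] branch_connected[OF that] unfolding branch_def by blast
  show "branch u \<inter> branch w = {}" if "u \<in> M" "w \<in> M" "u \<noteq> w" for u w
    using branch_disjoint[OF that] .
  show "\<exists>x\<in>branch u. \<exists>y\<in>branch w. {x, y} \<in> E" if uw: "u \<in> M" "w \<in> M" "u \<noteq> w" for u w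
  proof (cases rule: rank_cases[OF uw])
    case 1
    then show ?thesis using branch_adjacent_forward[OF uw(1,2)] by simp
  next
    case 2
    then obtain y x where "y \<in> branch w" "x \<in> branch u" "{y, x} \<in> E"
      using branch_adjacent_forward[OF uw(2,1)] by blast
    then show ?thesis by (auto simp: insert_commute)
  qed
qed

end

lemma pseudo_cliqueE:
  assumes "pseudo_clique V E n k"
  obtains M P rank where "pseudo_clique_layout M P V E rank" "card M = n"
proof -
  obtain M P where "finite M" "card M = n"
    "\<forall>u\<in>M. \<forall>v\<in>M. u \<noteq> v \<longrightarrow> P v u = rev (P u v) \<and> distinct (P u v) \<and> set (P u v) \<inter> M = {}"
    "\<forall>u\<in>M. \<forall>v\<in>M. \<forall>u'\<in>M. \<forall>v'\<in>M. u \<noteq> v \<and> u' \<noteq> v' \<and> {u, v} \<noteq> {u', v'} \<longrightarrow>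
       set (P u v) \<inter> set (P u' v') = {}"
    "V = M \<union> \<Union>{set (P u v) | u v. u \<in> M \<and> v \<in> M \<and> u \<noteq> v}"
    "E = \<Union>{path_edges (u # P u v @ [v]) | u v. u \<in> M \<and> v \<in> M \<and> u \<noteq> v}"
    using assms unfolding pseudo_clique_def by blast
  moreover obtain rank :: "'a \<Rightarrow> nat" where "inj_on rank M"
    using finite_imp_inj_to_nat_seg[OF \<open>finite M\<close>] by blast
  ultimately show ?thesis
    using that[of M P rank] unfolding pseudo_clique_layout_def by blast
qed

theorem theorem8:
  fixes V :: "'a set" and E :: "'a set set" and n k :: nat
  assumes "pseudo_clique V E n k" and "n \<ge> 3"
  shows "treewidth V E = n - 1"
proof -
  obtain M P rank where layout: "pseudo_clique_layout M P V E rank" and n: "card M = n"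
    using pseudo_cliqueE[OF assms(1)] by blast
  interpret pseudo_clique_layout M P V E rank by (fact layout)
  obtain I :: "nat set" and F B where "tree_decomposition V E I F B" "\<forall>i\<in>I. card (B i) \<le> n"
    using tree_decomposition_bags_le_card_main assms(2) n by blast
  then show ?thesis using treewidth_eqI tree_decomposition_bag_ge_card_main n by blast
qed

end
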